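(* In the setting described in the context, let $p>0$ and $q=\max\{2,p+1\}$, and assume $\sup_{n\geq1}\mathbb{E}[(B^{(n)})^q]<\infty$. Then \[ \limsup_{n\to\infty}(1-\rho^{(n)})^p\,\mathbb{E}[(W^{(n)})^p]<\infty. \]
   Context: For each $n\geq1$: a single-server queue with unit service speed; i.i.d. interarrival times $A^{(n)}_i$ and i.i.d. job sizes $B^{(n)}_i$ (independent, positive), $A^{(n)}=A^{(n)}_1$, $B^{(n)}=B^{(n)}_1$, load $\rho^{(n)}=\mathbb{E}[B^{(n)}]/\mathbb{E}[A^{(n)}]$. Standing assumptions: constants $\rho_0\in(0,1)$, $A_{\min}>0$ independent of $n$ with $\rho_0A_{\min}\leq\rho_0\mathbb{E}[A^{(n)}]\leq\mathbb{E}[B^{(n)}]<\mathbb{E}[A^{(n)}]$; $\rho^{(n)}\to1$; $A^{(n)}$ has finite variance and $\limsup_n\mathbb{E}[(A^{(n)})^2]<\infty$; constants $\delta,\gamma>0$ independent of $n$ with $\mathbb{P}(B^{(n)}-A^{(n)}\geq\delta)\geq\gamma$. $W^{(n)}$ is the steady-state total amount of work in the system seen by an arriving job; equivalently $W^{(n)}$ has the distribution of $\sup_{m\geq0}\sum_{i=1}^m(B^{(n)}_i-A^{(n)}_i)$ (empty sum $=0$). *)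

theory Defs
  imports "HOL-Probability.Probability"
begin

text \<open>Workload seen by an arriving job, as the supremum of the random walk
  with increments B i - A i (empty sum = 0), taking values in [0, infinity].\<close>
definition workload :: "(nat \<Rightarrow> 'a \<Rightarrow> real) \<Rightarrow> (nat \<Rightarrow> 'a \<Rightarrow> real) \<Rightarrow> 'a \<Rightarrow> ennreal" where
  "workload B A \<omega> = (SUP m. ennreal (\<Sum>i<m. B i \<omega> - A i \<omega>))"

definition enn_powr :: "ennreal \<Rightarrow> real \<Rightarrow> ennreal" where
  "enn_powr x p = (if x = \<top> then \<top> else ennreal (enn2real x powr p))"

end

theory Submission
  imports Defs
begin

text \<open>Write \<open>X i = B i - A i\<close>, an i.i.d. sequence of mean \<open>-\<mu> < 0\<close>. The workload \<open>W\<close> is the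
  increasing limit of the maxima \<open>W_N\<close> of the first \<open>N\<close> partial sums, and by Lindley's
  recursion \<open>W_(N+1)\<close> has the law of \<open>max 0 (X 0 + W')\<close> with \<open>W'\<close> an independent copy of
  \<open>W_N\<close>. Expanding \<open>(max 0 (w + x))^r\<close> to second order (\<open>r = q \<ge> 2\<close>) and using
  \<open>E[W_N^r] \<le> E[W_(N+1)^r]\<close> gives Kingman's drift inequality
  \<open>r \<mu> E[W_N^(r-1)] \<le> C (E[X^2] E[W_N^(r-2)] + E[(X^+)^r])\<close>. Bounding \<open>W_N^(r-2)\<close> by
  \<open>W_N^(r-1)\<close> and a constant at the scale \<open>1/\<mu>\<close> turns this into a bound on
  \<open>E[(\<mu> W_N)^(r-1)]\<close> depending only on \<open>E[X^2]\<close>, \<open>E[(X^+)^r]\<close> and an upper bound for \<open>\<mu>\<close>,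
  hence on \<open>E[(\<mu> W)^p]\<close> for \<open>p \<le> r - 1\<close>. Since \<open>1 - \<rho> = \<mu> / E[A] \<le> \<mu> / Amin\<close> and the
  moments of \<open>A\<close> and \<open>B\<close> are bounded uniformly in \<open>n\<close>, so is \<open>(1 - \<rho>)^p E[W^p]\<close>.\<close>

section \<open>Inequalities for real powers\<close>

lemma powr_ge_tangent:
  fixes s t a :: real
  assumes "0 < s" "0 < t" "1 \<le> a"
  shows "a * s powr (a - 1) * (t - s) \<le> t powr a - s powr a"
proof -
  have "((\<lambda>x::real. x powr a) has_field_derivative a * s powr (a - 1)) (at s within {0<..})"
    using assms by (auto intro!: derivative_eq_intros)
  then show ?thesis
    using convex_on_imp_above_tangent[OF powr_convex[OF assms(3)], of s t] assms
    by (auto simp: interior_open)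
qed

lemma powr_diff_le:
  fixes s t a :: real
  assumes "0 \<le> s" "s \<le> t" "1 \<le> a"
  shows "t powr a - s powr a \<le> a * t powr (a - 1) * (t - s)"
proof (cases "s = 0")
  case True
  have "t powr a \<le> a * t powr (a - 1) * t" if "0 < t"
  proof -
    have "t powr a = t powr (a - 1) * t" using that by (simp add: powr_diff)
    also have "\<dots> \<le> a * (t powr (a - 1) * t)"
      using mult_right_mono[of 1 a "t powr (a - 1) * t"] that assms(3) by simp
    finally show ?thesis by (simp add: mult.assoc)
  qed
  then show ?thesis using True assms by (cases "t = 0") auto
next
  case False
  then show ?thesis using powr_ge_tangent[of t s a] assms by (auto simp: algebra_simps)
qed

lemma powr_diff_ge:
  fixes s t a :: real
  assumes "0 \<le> s" "s \<le> t" "1 \<le> a"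
  shows "a * s powr (a - 1) * (t - s) \<le> t powr a - s powr a"
  using powr_ge_tangent[of s t a] assms by (cases "s = 0") auto

lemma powr_taylor_le_below:
  fixes u w r :: real
  assumes "0 \<le> u" "u \<le> w" "2 \<le> r"
  shows "u powr r \<le> w powr r + r * w powr (r - 1) * (u - w) + r * (r - 1) * ((u - w)\<^sup>2 * w powr (r - 2))"
proof -
  have lower: "r * u powr (r - 1) * (w - u) \<le> w powr r - u powr r"
    using powr_diff_ge[of u w r] assms by auto
  have "w powr (r - 1) - u powr (r - 1) \<le> (r - 1) * w powr (r - 2) * (w - u)"
    using powr_diff_le[of u w "r - 1"] assms by (auto simp: diff_diff_eq)
  then have "r * (w powr (r - 1) - (r - 1) * w powr (r - 2) * (w - u)) * (w - u)
             \<le> r * u powr (r - 1) * (w - u)"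
    using assms by (intro mult_right_mono mult_left_mono) auto
  with lower show ?thesis by (simp add: power2_eq_square algebra_simps)
qed

lemma powr_taylor_le_above:
  fixes v w r :: real
  assumes "0 \<le> w" "w \<le> v" "2 \<le> r"
  shows "v powr r \<le> w powr r + r * w powr (r - 1) * (v - w) + r * (r - 1) * ((v - w)\<^sup>2 * v powr (r - 2))"
proof -
  have upper: "v powr r - w powr r \<le> r * v powr (r - 1) * (v - w)"
    using powr_diff_le[of w v r] assms by auto
  have "v powr (r - 1) - w powr (r - 1) \<le> (r - 1) * v powr (r - 2) * (v - w)"
    using powr_diff_le[of w v "r - 1"] assms by (auto simp: diff_diff_eq)
  then have "r * v powr (r - 1) * (v - w) \<le> r * (w powr (r - 1) + (r - 1) * v powr (r - 2) * (v - w)) * (v - w)"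
    using assms by (intro mult_right_mono mult_left_mono) auto
  with upper show ?thesis by (simp add: power2_eq_square algebra_simps)
qed

lemma powr_taylor_nonneg:
  fixes w x r C :: real
  assumes w: "0 \<le> w" and x: "w + x < 0" and r: "0 \<le> r" "r \<le> C"
  shows "0 \<le> w powr r + r * w powr (r - 1) * x + C * (x\<^sup>2 * w powr (r - 2))"
proof (cases "w = 0")
  case False
  then have "w powr (r - 1) = w powr (r - 2) * w" "w powr r = w powr (r - 2) * w\<^sup>2"
    using powr_add[of w "r - 2" 1] powr_add[of w "r - 2" 2] w by (simp_all add: powr_numeral)
  \<comment> \<open>\<open>w < -x\<close>, so the linear term is dominated by the quadratic one.\<close>
  moreover have "r * (w * -x) \<le> C * x\<^sup>2"
    using mult_right_mono[of w "-x" "-x"] mult_nonneg_nonpos[of w x] w x r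
    by (intro mult_mono) (auto simp: power2_eq_square)
  then have "- (r * w * x) \<le> C * x\<^sup>2" by simp
  then have "0 \<le> w powr (r - 2) * (w\<^sup>2 + r * w * x + C * x\<^sup>2)"
    using zero_le_power2[of w] by (intro mult_nonneg_nonneg powr_ge_zero) linarith
  ultimately show ?thesis by (simp add: algebra_simps)
qed simp

lemma add_powr_le:
  fixes w x a :: real
  assumes "0 \<le> w" "0 \<le> x" "0 \<le> a"
  shows "(w + x) powr a \<le> 2 powr a * (w powr a + x powr a)"
proof -
  have "(w + x) powr a \<le> (2 * max w x) powr a" using assms by (intro powr_mono2) auto
  also have "\<dots> = 2 powr a * max w x powr a" using assms by (simp add: powr_mult)
  also have "\<dots> \<le> 2 powr a * (w powr a + x powr a)" by (intro mult_left_mono) (auto simp: max_def)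
  finally show ?thesis .
qed

lemma max0_add_powr_le:
  fixes w x r :: real
  assumes r: "2 \<le> r" and w: "0 \<le> w"
  shows "(max 0 (w + x)) powr r \<le> w powr r + r * w powr (r - 1) * x
           + r * r * 2 powr r * (x\<^sup>2 * w powr (r - 2) + (max 0 x) powr r)"
proof -
  define C where "C = r * r * 2 powr r"
  have "r * r \<le> C"
    using mult_left_mono[of 1 "2 powr r" "r * r"] ge_one_powr_ge_zero[of 2 r] r by (simp add: C_def)
  then have C: "r * (r - 1) \<le> C" "r \<le> C"
    using r by (auto intro: order_trans[of _ "r * r"] simp: algebra_simps)
  have tail: "0 \<le> C * (max 0 x) powr r" using C r by simp
  consider "x \<le> 0" "0 \<le> w + x" | "w + x < 0" | "0 < x" by linarith
  then show ?thesis
  proof cases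
    case 1
    then have "(w + x) powr r \<le> w powr r + r * w powr (r - 1) * x + r * (r - 1) * (x\<^sup>2 * w powr (r - 2))"
      using powr_taylor_le_below[of "w + x" w r] r by simp
    also have "\<dots> \<le> w powr r + r * w powr (r - 1) * x + C * (x\<^sup>2 * w powr (r - 2))"
      using C by (intro add_left_mono mult_right_mono) auto
    finally show ?thesis using tail 1 by (simp add: C_def[symmetric] distrib_left)
  next
    case 2
    then have "(max 0 (w + x)) powr r = 0" by simp
    also have "0 \<le> w powr r + r * w powr (r - 1) * x + C * (x\<^sup>2 * w powr (r - 2))"
      using powr_taylor_nonneg[OF w 2, of r C] C r by simp
    also have "\<dots> \<le> w powr r + r * w powr (r - 1) * x + C * (x\<^sup>2 * w powr (r - 2) + (max 0 x) powr r)"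
      using tail by (simp add: distrib_left)
    finally show ?thesis by (simp add: C_def)
  next
    case 3
    have "(w + x) powr (r - 2) \<le> 2 powr r * (w powr (r - 2) + x powr (r - 2))"
      using add_powr_le[of w x "r - 2"] powr_mono[of "r - 2" r 2] w 3 r
      by (smt (verit) mult_right_mono powr_ge_zero)
    then have "r * (r - 1) * (x\<^sup>2 * (w + x) powr (r - 2))
               \<le> r * (r - 1) * (x\<^sup>2 * (2 powr r * (w powr (r - 2) + x powr (r - 2))))"
      using r by (intro mult_left_mono) auto
    also have "\<dots> = r * (r - 1) * 2 powr r * (x\<^sup>2 * w powr (r - 2) + x powr (r - 2) * x\<^sup>2)"
      by (simp add: algebra_simps)
    also have "x powr (r - 2) * x\<^sup>2 = x powr r"
      using powr_add[of x "r - 2" 2] 3 by (simp add: powr_numeral)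
    also have "r * (r - 1) * 2 powr r * (x\<^sup>2 * w powr (r - 2) + x powr r) \<le> C * (x\<^sup>2 * w powr (r - 2) + x powr r)"
      unfolding C_def using r by (intro mult_right_mono) auto
    finally have "r * (r - 1) * (x\<^sup>2 * (w + x) powr (r - 2)) \<le> C * (x\<^sup>2 * w powr (r - 2) + x powr r)" .
    moreover have "max 0 (w + x) = w + x" "max 0 x = x" using w 3 by auto
    ultimately show ?thesis
      using powr_taylor_le_above[of w "w + x" r] w r 3 unfolding C_def
      by (simp only: add_diff_cancel_left' le_add_same_cancel1 less_imp_le True_implies_equals)
  qed
qed

lemma powr_le_split:
  fixes w l p a :: real
  assumes "0 \<le> w" "0 < l" "0 \<le> p" "p \<le> a"
  shows "w powr p \<le> l powr (p - a) * w powr a + l powr p"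
proof (cases "l \<le> w")
  case True
  then have "w powr p = w powr (p - a) * w powr a" using assms by (simp flip: powr_add)
  also have "\<dots> \<le> l powr (p - a) * w powr a"
    using True assms by (intro mult_right_mono powr_mono2') auto
  finally show ?thesis using powr_ge_zero[of l p] by linarith
next
  case False
  then have "w powr p \<le> l powr p" using assms by (intro powr_mono2) auto
  moreover have "0 \<le> l powr (p - a) * w powr a" by simp
  ultimately show ?thesis by linarith
qed

lemma powr_le_powr_add_one:
  fixes w p a :: real
  assumes "0 \<le> w" "0 \<le> p" "p \<le> a"
  shows "w powr p \<le> w powr a + 1"
  using powr_le_split[of w 1 p a] assms by simp

lemma sum_powr_le:
  fixes y :: "nat \<Rightarrow> real" and r :: real
  assumes "\<And>i. 0 \<le> y i" "0 < r"
  shows "(\<Sum>i<N. y i) powr r \<le> real N powr r * (\<Sum>i<N. y i powr r)"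
proof (cases "N = 0")
  case False
  obtain j where j: "j < N" "y j = Max (y ` {..<N})"
    using Max_in[of "y ` {..<N}"] False by fastforce
  then have max: "y i \<le> y j" if "i < N" for i using that by simp
  have "(\<Sum>i<N. y i) \<le> real N * y j" using sum_mono[of "{..<N}" y "\<lambda>_. y j"] max by simp
  then have "(\<Sum>i<N. y i) powr r \<le> (real N * y j) powr r"
    using assms by (intro powr_mono2 sum_nonneg) auto
  also have "\<dots> = real N powr r * y j powr r" using assms by (simp add: powr_mult)
  also have "\<dots> \<le> real N powr r * (\<Sum>i<N. y i powr r)"
    using j by (intro mult_left_mono member_le_sum[of j "{..<N}" "\<lambda>i. y i powr r"]) auto
  finally show ?thesis .
qed simp

section \<open>Maxima of partial sums\<close>

text \<open>The maximum of the partial sums \<open>\<Sum>i<m. x i\<close> over \<open>m \<le> N\<close> (\<open>partial_sum_max_eq_sum\<close>),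
  defined through Lindley's recursion, the form in which the drift argument uses it.\<close>

fun partial_sum_max :: "nat \<Rightarrow> (nat \<Rightarrow> real) \<Rightarrow> real" where
  "partial_sum_max 0 x = 0"
| "partial_sum_max (Suc N) x = max 0 (x 0 + partial_sum_max N (\<lambda>i. x (Suc i)))"

lemma partial_sum_max_nonneg: "0 \<le> partial_sum_max N x"
  by (cases N) auto

lemma partial_sum_max_cong:
  "(\<And>i. i < N \<Longrightarrow> x i = y i) \<Longrightarrow> partial_sum_max N x = partial_sum_max N y"
proof (induction N arbitrary: x y)
  case (Suc N)
  have "partial_sum_max N (\<lambda>i. x (Suc i)) = partial_sum_max N (\<lambda>i. y (Suc i))"
    using Suc.prems by (intro Suc.IH) simp
  moreover have "x 0 = y 0" using Suc.prems by simp
  ultimately show ?case by simp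
qed simp

lemma sum_le_partial_sum_max: "m \<le> N \<Longrightarrow> (\<Sum>i<m. x i) \<le> partial_sum_max N x"
proof (induction N arbitrary: x m)
  case (Suc N)
  show ?case
  proof (cases m)
    case (Suc m')
    then have "(\<Sum>i<m. x i) = x 0 + (\<Sum>i<m'. x (Suc i))"
      by (simp only: sum.lessThan_Suc_shift)
    also have "\<dots> \<le> x 0 + partial_sum_max N (\<lambda>i. x (Suc i))"
      using Suc.IH[of m' "\<lambda>i. x (Suc i)"] Suc.prems Suc by simp
    finally show ?thesis by simp
  qed simp
qed simp

lemma partial_sum_max_eq_sum: "\<exists>m\<le>N. partial_sum_max N x = (\<Sum>i<m. x i)"
proof (induction N arbitrary: x)
  case (Suc N)
  obtain m where m: "m \<le> N" "partial_sum_max N (\<lambda>i. x (Suc i)) = (\<Sum>i<m. x (Suc i))"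
    using Suc.IH by blast
  show ?case
  proof (cases "0 \<le> x 0 + partial_sum_max N (\<lambda>i. x (Suc i))")
    case True
    then have "partial_sum_max (Suc N) x = (\<Sum>i<Suc m. x i)"
      using m by (simp add: sum.lessThan_Suc_shift del: sum.lessThan_Suc)
    then show ?thesis using m by blast
  qed auto
qed simp

lemma partial_sum_max_mono:
  assumes "N \<le> N'"
  shows "partial_sum_max N x \<le> partial_sum_max N' x"
proof -
  obtain m where "m \<le> N" "partial_sum_max N x = (\<Sum>i<m. x i)"
    using partial_sum_max_eq_sum by blast
  then show ?thesis using sum_le_partial_sum_max[of m N' x] assms by simp
qed

lemma partial_sum_max_le_sum_pos: "partial_sum_max N x \<le> (\<Sum>i<N. max 0 (x i))"
proof -
  obtain m where m: "m \<le> N" "partial_sum_max N x = (\<Sum>i<m. x i)"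
    using partial_sum_max_eq_sum by blast
  have "(\<Sum>i<m. x i) \<le> (\<Sum>i<m. max 0 (x i))" by (intro sum_mono) auto
  also have "\<dots> \<le> (\<Sum>i<N. max 0 (x i))" using m by (intro sum_mono2) auto
  finally show ?thesis using m by simp
qed

lemma SUP_sum_eq_SUP_partial_sum_max:
  "(SUP m. ennreal (\<Sum>i<m. x i)) = (SUP N. ennreal (partial_sum_max N x))"
proof (rule antisym)
  show "(SUP m. ennreal (\<Sum>i<m. x i)) \<le> (SUP N. ennreal (partial_sum_max N x))"
  proof (rule SUP_mono)
    show "\<exists>N\<in>UNIV. ennreal (\<Sum>i<m. x i) \<le> ennreal (partial_sum_max N x)" for m
      by (intro bexI[of _ m] ennreal_leI sum_le_partial_sum_max) simp_all
  qed
  show "(SUP N. ennreal (partial_sum_max N x)) \<le> (SUP m. ennreal (\<Sum>i<m. x i))"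
  proof (rule SUP_mono)
    fix N
    obtain m where "partial_sum_max N x = (\<Sum>i<m. x i)"
      using partial_sum_max_eq_sum by blast
    then show "\<exists>m\<in>UNIV. ennreal (partial_sum_max N x) \<le> ennreal (\<Sum>i<m. x i)" by auto
  qed
qed

lemma borel_measurable_partial_sum_max:
  "(\<And>i. i < N \<Longrightarrow> X i \<in> borel_measurable M) \<Longrightarrow>
   (\<lambda>\<omega>. partial_sum_max N (\<lambda>i. X i \<omega>)) \<in> borel_measurable M"
proof (induction N arbitrary: X)
  case (Suc N)
  have [measurable]: "X 0 \<in> borel_measurable M" using Suc.prems by simp
  have [measurable]: "(\<lambda>\<omega>. partial_sum_max N (\<lambda>i. X (Suc i) \<omega>)) \<in> borel_measurable M"
    using Suc by simp
  show ?case by (simp only: partial_sum_max.simps) measurable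
qed simp

lemma enn_powr_SUP_le:
  fixes g :: "nat \<Rightarrow> real"
  assumes g: "\<And>N. 0 \<le> g N" "incseq g" and p: "0 < p"
  shows "enn_powr (SUP N. ennreal (g N)) p \<le> (SUP N. ennreal (g N powr p))"
proof (cases "(SUP N. ennreal (g N)) = \<top>")
  case True
  have "(SUP N. ennreal (g N powr p)) = \<top>"
  proof (rule ennreal_SUP_eq_top)
    fix n :: nat
    obtain i where "ennreal (real n powr (1 / p)) < ennreal (g i)"
      using True by (metis SUP_least ennreal_neq_top not_le top.extremum_unique)
    then have "real n powr (1 / p) < g i" by (simp add: ennreal_less_iff)
    then have "(real n powr (1 / p)) powr p \<le> g i powr p" using p by (intro powr_mono2) auto
    then show "\<exists>i\<in>UNIV. of_nat n \<le> ennreal (g i powr p)"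
      using p by (auto simp: powr_powr ennreal_of_nat_eq_real_of_nat)
  qed
  then show ?thesis by (simp only: top_greatest)
next
  case False
  then obtain c where c: "(SUP N. ennreal (g N)) = ennreal c" "0 \<le> c"
    by (metis ennreal_cases)
  have "(\<lambda>N. ennreal (g N)) \<longlonglongrightarrow> ennreal c"
    using LIMSEQ_SUP[of "\<lambda>N. ennreal (g N)"] g c by (auto simp: incseq_def)
  then have "g \<longlonglongrightarrow> c" using g c by simp
  then have "(\<lambda>N. ennreal (g N powr p)) \<longlonglongrightarrow> ennreal (c powr p)"
    using g p by (intro tendsto_ennrealI tendsto_powr') auto
  then have "ennreal (c powr p) \<le> (SUP N. ennreal (g N powr p))"
    by (rule LIMSEQ_le_const2) (intro exI[of _ 0] allI impI SUP_upper UNIV_I)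
  then show ?thesis using c by (simp add: enn_powr_def)
qed

section \<open>Random walks with i.i.d. increments\<close>

text \<open>The bound on \<open>\<mu> powr (r - 1) * E[walk_max N powr (r - 1)]\<close> produced by
  \<open>walk_max_moment_le\<close>; \<open>r * r * 2 powr r\<close> is the constant of \<open>max0_add_powr_le\<close>.\<close>

definition walk_moment_bound :: "real \<Rightarrow> real \<Rightarrow> real \<Rightarrow> real \<Rightarrow> real" where
  "walk_moment_bound r s c \<mu> = 2 / r * (r * r * 2 powr r) *
     ((s + 1) * (2 * (r * r * 2 powr r) * (s + 1) / r) powr (r - 2) + c * \<mu> powr (r - 2))"

lemma walk_moment_bound_mono:
  assumes "2 \<le> r" "0 \<le> s" "s \<le> s'" "0 \<le> c" "c \<le> c'" "0 \<le> \<mu>" "\<mu> \<le> \<mu>'"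
  shows "walk_moment_bound r s c \<mu> \<le> walk_moment_bound r s' c' \<mu>'"
  unfolding walk_moment_bound_def using assms
  by (intro mult_left_mono add_mono mult_mono powr_mono2 divide_right_mono) auto

lemma walk_moment_bound_nonneg:
  assumes "2 \<le> r" "0 \<le> s" "0 \<le> c" "0 \<le> \<mu>"
  shows "0 \<le> walk_moment_bound r s c \<mu>"
  unfolding walk_moment_bound_def using assms by simp

lemma (in prob_space) indep_vars_compose_restrict:
  assumes "indep_vars M' X I" "\<And>j. j \<in> J \<Longrightarrow> K j \<subseteq> I" "disjoint_family_on K J"
    and "\<And>j. j \<in> J \<Longrightarrow> f j \<in> measurable (PiM (K j) M') (N j)"
  shows "indep_vars N (\<lambda>j \<omega>. f j (\<lambda>i\<in>K j. X i \<omega>)) J"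
  using indep_vars_compose2[OF indep_vars_restrict[OF assms(1-3)] assms(4)] .

locale iid_sequence = prob_space +
  fixes X :: "nat \<Rightarrow> 'a \<Rightarrow> real"
  assumes indep: "indep_vars (\<lambda>_. borel) X UNIV"
    and identically_distributed: "\<And>i. distr M borel (X i) = distr M borel (X 0)"
begin

lemma measurable_X [measurable]: "X i \<in> borel_measurable M"
  using indep by (auto simp: indep_vars_def)

lemma iid_sequence_shift: "iid_sequence M (\<lambda>i. X (i + k))"
proof
  have "indep_vars (\<lambda>_. borel) (\<lambda>j \<omega>. (\<lambda>i\<in>{j + k}. X i \<omega>) (j + k)) UNIV"
    by (rule indep_vars_compose_restrict[OF indep])
       (auto simp: disjoint_family_on_def intro: measurable_component_singleton)
  then show "indep_vars (\<lambda>_. borel) (\<lambda>i. X (i + k)) UNIV" by simp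
  show "distr M borel (X (i + k)) = distr M borel (X (0 + k))" for i
    using identically_distributed[of "i + k"] identically_distributed[of k] by simp
qed

lemma integrable_comp_X_iff:
  assumes [measurable]: "g \<in> borel_measurable borel"
  shows "integrable M (\<lambda>\<omega>. g (X i \<omega>)) \<longleftrightarrow> integrable M (\<lambda>\<omega>. (g :: real \<Rightarrow> real) (X 0 \<omega>))"
  using integrable_distr_eq[of "X i" M borel g] integrable_distr_eq[of "X 0" M borel g]
  by (simp add: identically_distributed[of i])

abbreviation walk_max :: "nat \<Rightarrow> 'a \<Rightarrow> real" where
  "walk_max N \<omega> \<equiv> partial_sum_max N (\<lambda>i. X i \<omega>)"

lemma borel_measurable_walk_max_shift [measurable]:
  "(\<lambda>\<omega>. partial_sum_max N (\<lambda>i. X (i + k) \<omega>)) \<in> borel_measurable M"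
  "walk_max N \<in> borel_measurable M"
  by (rule borel_measurable_partial_sum_max, simp)+

lemma distr_walk_max:
  assumes "N \<noteq> 0"
  shows "distr M borel (walk_max N) = distr (PiM {..<N} (\<lambda>_. distr M borel (X 0))) borel (partial_sum_max N)"
proof -
  have meas: "partial_sum_max N \<in> borel_measurable (PiM {..<N} (\<lambda>_. borel))"
    using borel_measurable_partial_sum_max[of N "\<lambda>i y. y i" "PiM {..<N} (\<lambda>_. borel)"]
    by (auto intro: measurable_component_singleton)
  have "walk_max N = partial_sum_max N \<circ> (\<lambda>\<omega>. \<lambda>i\<in>{..<N}. X i \<omega>)"
    by (intro ext) (auto intro: partial_sum_max_cong)
  then have "distr M borel (walk_max N) =
             distr (distr M (PiM {..<N} (\<lambda>_. borel)) (\<lambda>\<omega>. \<lambda>i\<in>{..<N}. X i \<omega>)) borel (partial_sum_max N)"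
    by (simp add: distr_distr[OF meas] measurable_restrict)
  also have "distr M (PiM {..<N} (\<lambda>_. borel)) (\<lambda>\<omega>. \<lambda>i\<in>{..<N}. X i \<omega>) = PiM {..<N} (\<lambda>i. distr M borel (X i))"
    using assms indep_vars_subset[OF indep, of "{..<N}"] by (subst indep_vars_iff_distr_eq_PiM'[symmetric]) auto
  also have "\<dots> = PiM {..<N} (\<lambda>_. distr M borel (X 0))"
    using identically_distributed by (intro PiM_cong) auto
  finally show ?thesis .
qed

lemma distr_walk_max_shift:
  "distr M borel (\<lambda>\<omega>. partial_sum_max N (\<lambda>i. X (i + k) \<omega>)) = distr M borel (walk_max N)"
proof (cases "N = 0")
  case False
  interpret shift: iid_sequence M "\<lambda>i. X (i + k)" by (rule iid_sequence_shift)
  show ?thesis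
    using distr_walk_max[OF False] shift.distr_walk_max[OF False] identically_distributed[of k] by simp
qed simp

lemma walk_max_shift_integral:
  fixes g :: "real \<Rightarrow> real"
  assumes [measurable]: "g \<in> borel_measurable borel"
  shows "integrable M (\<lambda>\<omega>. g (partial_sum_max N (\<lambda>i. X (i + k) \<omega>))) \<longleftrightarrow> integrable M (\<lambda>\<omega>. g (walk_max N \<omega>))"
    and "(\<integral>\<omega>. g (partial_sum_max N (\<lambda>i. X (i + k) \<omega>)) \<partial>M) = (\<integral>\<omega>. g (walk_max N \<omega>) \<partial>M)"
proof -
  show "integrable M (\<lambda>\<omega>. g (partial_sum_max N (\<lambda>i. X (i + k) \<omega>))) \<longleftrightarrow> integrable M (\<lambda>\<omega>. g (walk_max N \<omega>))"
    using integrable_distr_eq[of "\<lambda>\<omega>. partial_sum_max N (\<lambda>i. X (i + k) \<omega>)" M borel g]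
      integrable_distr_eq[of "\<lambda>\<omega>. partial_sum_max N (\<lambda>i. X (i + 0) \<omega>)" M borel g]
    by (simp add: distr_walk_max_shift)
  show "(\<integral>\<omega>. g (partial_sum_max N (\<lambda>i. X (i + k) \<omega>)) \<partial>M) = (\<integral>\<omega>. g (walk_max N \<omega>) \<partial>M)"
    using integral_distr[of "\<lambda>\<omega>. partial_sum_max N (\<lambda>i. X (i + k) \<omega>)" M borel g]
      integral_distr[of "\<lambda>\<omega>. partial_sum_max N (\<lambda>i. X (i + 0) \<omega>)" M borel g]
    by (simp add: distr_walk_max_shift)
qed

lemma indep_var_head_tail_walk_max:
  "indep_var borel (X 0) borel (\<lambda>\<omega>. partial_sum_max N (\<lambda>i. X (Suc i) \<omega>))"
proof -
  have "indep_var borel ((\<lambda>y. y 0) \<circ> (\<lambda>\<omega>. \<lambda>i\<in>{0}. X i \<omega>))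
          borel ((\<lambda>y. partial_sum_max N (\<lambda>i. y (Suc i))) \<circ> (\<lambda>\<omega>. \<lambda>i\<in>{1..}. X i \<omega>))"
  proof (rule indep_var_compose[OF indep_var_restrict[OF indep]])
    show "(\<lambda>y. partial_sum_max N (\<lambda>i. y (Suc i))) \<in> borel_measurable (PiM {1..} (\<lambda>_. borel))"
      by (rule borel_measurable_partial_sum_max) (auto intro: measurable_component_singleton)
  qed (auto intro: measurable_component_singleton)
  then show ?thesis by (simp add: comp_def)
qed

lemma integral_head_mult_tail_walk_max:
  fixes h g :: "real \<Rightarrow> real"
  assumes [measurable]: "h \<in> borel_measurable borel" "g \<in> borel_measurable borel"
    and h: "integrable M (\<lambda>\<omega>. h (X 0 \<omega>))" and g: "integrable M (\<lambda>\<omega>. g (walk_max N \<omega>))"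
  shows "integrable M (\<lambda>\<omega>. h (X 0 \<omega>) * g (partial_sum_max N (\<lambda>i. X (Suc i) \<omega>)))"
    and "(\<integral>\<omega>. h (X 0 \<omega>) * g (partial_sum_max N (\<lambda>i. X (Suc i) \<omega>)) \<partial>M)
           = expectation (\<lambda>\<omega>. h (X 0 \<omega>)) * expectation (\<lambda>\<omega>. g (walk_max N \<omega>))"
proof -
  have indep_hg: "indep_var borel (\<lambda>\<omega>. h (X 0 \<omega>)) borel (\<lambda>\<omega>. g (partial_sum_max N (\<lambda>i. X (Suc i) \<omega>)))"
    using indep_var_compose[OF indep_var_head_tail_walk_max, of h borel g borel N] by (simp add: comp_def)
  have tail: "integrable M (\<lambda>\<omega>. g (partial_sum_max N (\<lambda>i. X (Suc i) \<omega>)))"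
    using walk_max_shift_integral(1)[of g N 1] g by simp
  show "integrable M (\<lambda>\<omega>. h (X 0 \<omega>) * g (partial_sum_max N (\<lambda>i. X (Suc i) \<omega>)))"
    using indep_var_integrable[OF indep_hg h tail] by simp
  show "(\<integral>\<omega>. h (X 0 \<omega>) * g (partial_sum_max N (\<lambda>i. X (Suc i) \<omega>)) \<partial>M)
          = expectation (\<lambda>\<omega>. h (X 0 \<omega>)) * expectation (\<lambda>\<omega>. g (walk_max N \<omega>))"
    using indep_var_lebesgue_integral[OF indep_hg h tail] walk_max_shift_integral(2)[of g N 1] by simp
qed

lemma nn_integral_enn_powr_SUP_sum_le:
  assumes p: "0 < p" and int: "\<And>N. integrable M (\<lambda>\<omega>. walk_max N \<omega> powr p)"
    and bound: "\<And>N. expectation (\<lambda>\<omega>. walk_max N \<omega> powr p) \<le> K"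
  shows "(\<integral>\<^sup>+\<omega>. enn_powr (SUP m. ennreal (\<Sum>i<m. X i \<omega>)) p \<partial>M) \<le> ennreal K"
proof -
  have "(\<integral>\<^sup>+\<omega>. enn_powr (SUP m. ennreal (\<Sum>i<m. X i \<omega>)) p \<partial>M)
        \<le> (\<integral>\<^sup>+\<omega>. (SUP N. ennreal (walk_max N \<omega> powr p)) \<partial>M)"
  proof (rule nn_integral_mono)
    show "enn_powr (SUP m. ennreal (\<Sum>i<m. X i \<omega>)) p \<le> (SUP N. ennreal (walk_max N \<omega> powr p))" for \<omega>
      unfolding SUP_sum_eq_SUP_partial_sum_max
      using p by (intro enn_powr_SUP_le partial_sum_max_nonneg incseq_SucI partial_sum_max_mono) auto
  qed
  also have "\<dots> = (SUP N. \<integral>\<^sup>+\<omega>. ennreal (walk_max N \<omega> powr p) \<partial>M)"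
  proof (rule nn_integral_monotone_convergence_SUP)
    show "incseq (\<lambda>N \<omega>. ennreal (walk_max N \<omega> powr p))"
      using p by (intro monoI le_funI ennreal_leI powr_mono2 partial_sum_max_mono partial_sum_max_nonneg) auto
  qed simp
  also have "\<dots> \<le> ennreal K"
  proof (rule SUP_least)
    fix N
    have "(\<integral>\<^sup>+\<omega>. ennreal (walk_max N \<omega> powr p) \<partial>M) = ennreal (expectation (\<lambda>\<omega>. walk_max N \<omega> powr p))"
      using int by (intro nn_integral_eq_integral) auto
    also have "\<dots> \<le> ennreal K" using bound by (rule ennreal_leI)
    finally show "(\<integral>\<^sup>+\<omega>. ennreal (walk_max N \<omega> powr p) \<partial>M) \<le> ennreal K" .
  qed
  finally show ?thesis .
qed

context
  fixes r :: real
  assumes r: "2 \<le> r"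
    and integrable_X: "integrable M (X 0)"
    and integrable_X_sq: "integrable M (\<lambda>\<omega>. (X 0 \<omega>)\<^sup>2)"
    and integrable_pos_part_X: "integrable M (\<lambda>\<omega>. max 0 (X 0 \<omega>) powr r)"
begin

lemma integrable_walk_max_powr:
  assumes "0 \<le> a" "a \<le> r"
  shows "integrable M (\<lambda>\<omega>. walk_max N \<omega> powr a)"
proof (rule Bochner_Integration.integrable_bound)
  have "integrable M (\<lambda>\<omega>. max 0 (X i \<omega>) powr r)" for i
    using integrable_comp_X_iff[of "\<lambda>x. max 0 x powr r" i] integrable_pos_part_X by simp
  then show "integrable M (\<lambda>\<omega>. real N powr r * (\<Sum>i<N. max 0 (X i \<omega>) powr r) + 1)"
    by auto
  show "AE \<omega> in M. norm (walk_max N \<omega> powr a) \<le> norm (real N powr r * (\<Sum>i<N. max 0 (X i \<omega>) powr r) + 1)"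
  proof (rule AE_I2)
    fix \<omega>
    have "walk_max N \<omega> powr a \<le> walk_max N \<omega> powr r + 1"
      using assms by (intro powr_le_powr_add_one partial_sum_max_nonneg)
    also have "walk_max N \<omega> powr r \<le> (\<Sum>i<N. max 0 (X i \<omega>)) powr r"
      using r by (intro powr_mono2 partial_sum_max_le_sum_pos partial_sum_max_nonneg) auto
    also have "\<dots> \<le> real N powr r * (\<Sum>i<N. max 0 (X i \<omega>) powr r)"
      using r by (intro sum_powr_le) auto
    finally show "norm (walk_max N \<omega> powr a) \<le> norm (real N powr r * (\<Sum>i<N. max 0 (X i \<omega>) powr r) + 1)"
      by (simp add: sum_nonneg)
  qed
qed simp

text \<open>\<open>walk_max (Suc N) = max 0 (X 0 + V)\<close>, where \<open>V\<close> is independent of \<open>X 0\<close> and distributed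
  as \<open>walk_max N\<close>; so the second-order expansion \<open>max0_add_powr_le\<close> can be integrated term by term.\<close>

lemma expectation_walk_max_Suc_powr_le:
  "expectation (\<lambda>\<omega>. walk_max (Suc N) \<omega> powr r)
   \<le> expectation (\<lambda>\<omega>. walk_max N \<omega> powr r)
     + r * expectation (X 0) * expectation (\<lambda>\<omega>. walk_max N \<omega> powr (r - 1))
     + r * r * 2 powr r * (expectation (\<lambda>\<omega>. (X 0 \<omega>)\<^sup>2) * expectation (\<lambda>\<omega>. walk_max N \<omega> powr (r - 2))
                           + expectation (\<lambda>\<omega>. max 0 (X 0 \<omega>) powr r))"
proof -
  define C where "C = r * r * 2 powr r"
  define T where "T \<omega> = partial_sum_max N (\<lambda>i. X (Suc i) \<omega>)" for \<omega>
  define R where "R = (\<lambda>\<omega>. T \<omega> powr r + r * (X 0 \<omega> * T \<omega> powr (r - 1))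
    + C * ((X 0 \<omega>)\<^sup>2 * T \<omega> powr (r - 2) + max 0 (X 0 \<omega>) powr r))"
  have V: "integrable M (\<lambda>\<omega>. walk_max n \<omega> powr a)" if "0 \<le> a" "a \<le> r" for a n
    using integrable_walk_max_powr that by simp
  have T: "integrable M (\<lambda>\<omega>. T \<omega> powr r)"
          "expectation (\<lambda>\<omega>. T \<omega> powr r) = expectation (\<lambda>\<omega>. walk_max N \<omega> powr r)"
    using walk_max_shift_integral[of "\<lambda>t. t powr r" N 1] V[of r N] r by (simp_all add: T_def)
  have XT1: "integrable M (\<lambda>\<omega>. X 0 \<omega> * T \<omega> powr (r - 1))"
            "expectation (\<lambda>\<omega>. X 0 \<omega> * T \<omega> powr (r - 1))
               = expectation (X 0) * expectation (\<lambda>\<omega>. walk_max N \<omega> powr (r - 1))"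
    using integral_head_mult_tail_walk_max[of "\<lambda>x. x" "\<lambda>t. t powr (r - 1)"] integrable_X V[of "r - 1" N] r
    by (simp_all add: T_def)
  have XT2: "integrable M (\<lambda>\<omega>. (X 0 \<omega>)\<^sup>2 * T \<omega> powr (r - 2))"
            "expectation (\<lambda>\<omega>. (X 0 \<omega>)\<^sup>2 * T \<omega> powr (r - 2))
               = expectation (\<lambda>\<omega>. (X 0 \<omega>)\<^sup>2) * expectation (\<lambda>\<omega>. walk_max N \<omega> powr (r - 2))"
    using integral_head_mult_tail_walk_max[of "\<lambda>x. x\<^sup>2" "\<lambda>t. t powr (r - 2)"] integrable_X_sq V[of "r - 2" N] r
    by (simp_all add: T_def)
  have "expectation (\<lambda>\<omega>. walk_max (Suc N) \<omega> powr r) \<le> expectation R"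
  proof (rule integral_mono)
    show "integrable M (\<lambda>\<omega>. walk_max (Suc N) \<omega> powr r)"
      using r by (auto intro!: V simp del: partial_sum_max.simps)
    show "integrable M R" using T XT1 XT2 integrable_pos_part_X by (simp add: R_def)
    show "walk_max (Suc N) \<omega> powr r \<le> R \<omega>" for \<omega>
      using max0_add_powr_le[OF r partial_sum_max_nonneg, of N "\<lambda>i. X (Suc i) \<omega>" "X 0 \<omega>"]
      by (simp add: R_def T_def C_def algebra_simps)
  qed
  also have "expectation R = expectation (\<lambda>\<omega>. walk_max N \<omega> powr r)
      + r * (expectation (X 0) * expectation (\<lambda>\<omega>. walk_max N \<omega> powr (r - 1)))
      + C * (expectation (\<lambda>\<omega>. (X 0 \<omega>)\<^sup>2) * expectation (\<lambda>\<omega>. walk_max N \<omega> powr (r - 2))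
             + expectation (\<lambda>\<omega>. max 0 (X 0 \<omega>) powr r))"
    using T XT1 XT2 integrable_pos_part_X by (simp add: R_def)
  finally show ?thesis by (simp add: C_def algebra_simps)
qed

lemma drift_inequality:
  "r * - expectation (X 0) * expectation (\<lambda>\<omega>. walk_max N \<omega> powr (r - 1))
   \<le> r * r * 2 powr r * (expectation (\<lambda>\<omega>. (X 0 \<omega>)\<^sup>2) * expectation (\<lambda>\<omega>. walk_max N \<omega> powr (r - 2))
                          + expectation (\<lambda>\<omega>. max 0 (X 0 \<omega>) powr r))"
proof -
  have "expectation (\<lambda>\<omega>. walk_max N \<omega> powr r) \<le> expectation (\<lambda>\<omega>. walk_max (Suc N) \<omega> powr r)"
  proof (rule integral_mono)
    show "integrable M (\<lambda>\<omega>. walk_max N \<omega> powr r)" "integrable M (\<lambda>\<omega>. walk_max (Suc N) \<omega> powr r)"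
      using r by (auto intro!: integrable_walk_max_powr simp del: partial_sum_max.simps)
    show "walk_max N \<omega> powr r \<le> walk_max (Suc N) \<omega> powr r" for \<omega>
      using r by (intro powr_mono2 partial_sum_max_mono partial_sum_max_nonneg) auto
  qed
  with expectation_walk_max_Suc_powr_le[of N] show ?thesis by (simp add: algebra_simps)
qed

lemma expectation_walk_max_powr_interpolate:
  assumes "0 < l"
  shows "expectation (\<lambda>\<omega>. walk_max N \<omega> powr (r - 2))
           \<le> expectation (\<lambda>\<omega>. walk_max N \<omega> powr (r - 1)) / l + l powr (r - 2)"
proof -
  have "expectation (\<lambda>\<omega>. walk_max N \<omega> powr (r - 2))
        \<le> expectation (\<lambda>\<omega>. walk_max N \<omega> powr (r - 1) / l + l powr (r - 2))"
  proof (rule integral_mono)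
    show "integrable M (\<lambda>\<omega>. walk_max N \<omega> powr (r - 2))"
         "integrable M (\<lambda>\<omega>. walk_max N \<omega> powr (r - 1) / l + l powr (r - 2))"
      using integrable_walk_max_powr[of "r - 2" N] integrable_walk_max_powr[of "r - 1" N] r by auto
    show "walk_max N \<omega> powr (r - 2) \<le> walk_max N \<omega> powr (r - 1) / l + l powr (r - 2)" for \<omega>
      using powr_le_split[OF partial_sum_max_nonneg, of l "r - 2" "r - 1"] assms r
      by (simp add: powr_minus_divide)
  qed
  also have "\<dots> = expectation (\<lambda>\<omega>. walk_max N \<omega> powr (r - 1)) / l + l powr (r - 2)"
    using integrable_walk_max_powr[of "r - 1" N] r by (simp add: prob_space)
  finally show ?thesis .
qed

lemma walk_max_moment_le:
  assumes "expectation (X 0) < 0"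
  defines "\<mu> \<equiv> - expectation (X 0)"
  shows "\<mu> powr (r - 1) * expectation (\<lambda>\<omega>. walk_max N \<omega> powr (r - 1))
           \<le> walk_moment_bound r (expectation (\<lambda>\<omega>. (X 0 \<omega>)\<^sup>2)) (expectation (\<lambda>\<omega>. max 0 (X 0 \<omega>) powr r)) \<mu>"
proof -
  define s where "s = expectation (\<lambda>\<omega>. (X 0 \<omega>)\<^sup>2)"
  define c where "c = expectation (\<lambda>\<omega>. max 0 (X 0 \<omega>) powr r)"
  define C where "C = r * r * 2 powr r"
  define z where "z = expectation (\<lambda>\<omega>. walk_max N \<omega> powr (r - 1))"
  define y where "y = expectation (\<lambda>\<omega>. walk_max N \<omega> powr (r - 2))"
  define D where "D = 2 * C * (s + 1) / r"
  have \<mu>: "0 < \<mu>" using assms by simp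
  have s: "0 \<le> s" unfolding s_def by (intro integral_nonneg_AE) auto
  have C: "0 < C" using r by (simp add: C_def)
  have D: "0 < D" using C s r by (simp add: D_def)
  have y: "0 \<le> y" unfolding y_def by (intro integral_nonneg_AE) auto
  have drift: "r * \<mu> * z \<le> C * (s * y + c)"
    using drift_inequality[of N] by (simp add: \<mu>_def s_def c_def C_def z_def y_def)
  \<comment> \<open>\<open>D / \<mu>\<close> is the scale of the workload; interpolating there makes the
    \<open>(r - 2)\<close>-th moment term absorbable into the left-hand side of the drift inequality.\<close>
  have y_le: "y \<le> \<mu> / D * z + (D / \<mu>) powr (r - 2)"
    using expectation_walk_max_powr_interpolate[of "D / \<mu>" N] D \<mu> by (simp add: y_def z_def mult.commute)
  have "C * s * y \<le> C * (s + 1) * (\<mu> / D * z + (D / \<mu>) powr (r - 2))"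
    using C s y y_le by (intro mult_mono) auto
  also have "\<dots> = r * \<mu> / 2 * z + C * (s + 1) * (D / \<mu>) powr (r - 2)"
    using C s r D \<mu> by (simp add: D_def field_simps)
  finally have "r * \<mu> / 2 * z \<le> C * (s + 1) * (D / \<mu>) powr (r - 2) + C * c"
    using drift by (simp add: algebra_simps)
  have "\<mu> powr (r - 1) * z = \<mu> powr (r - 2) * (\<mu> * z)"
    using powr_add[of \<mu> "r - 2" 1] \<mu> by simp
  also have "\<dots> \<le> \<mu> powr (r - 2) * (2 / r * (C * (s + 1) * (D / \<mu>) powr (r - 2) + C * c))"
    using \<open>r * \<mu> / 2 * z \<le> _\<close> r by (intro mult_left_mono) (auto simp: field_simps)
  also have "\<dots> = 2 / r * (C * (s + 1) * (\<mu> powr (r - 2) * (D / \<mu>) powr (r - 2)) + C * c * \<mu> powr (r - 2))"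
    by (simp add: algebra_simps)
  also have "\<mu> powr (r - 2) * (D / \<mu>) powr (r - 2) = D powr (r - 2)"
    using \<mu> D by (simp add: powr_divide)
  also have "2 / r * (C * (s + 1) * D powr (r - 2) + C * c * \<mu> powr (r - 2)) = walk_moment_bound r s c \<mu>"
    unfolding walk_moment_bound_def C_def[symmetric] D_def[symmetric] by (simp add: algebra_simps)
  finally show ?thesis by (simp add: s_def c_def z_def)
qed

lemma walk_max_scaled_moment_le:
  assumes "expectation (X 0) < 0" "0 < p" "p \<le> r - 1"
  defines "\<mu> \<equiv> - expectation (X 0)"
  shows "\<mu> powr p * expectation (\<lambda>\<omega>. walk_max N \<omega> powr p)
           \<le> walk_moment_bound r (expectation (\<lambda>\<omega>. (X 0 \<omega>)\<^sup>2)) (expectation (\<lambda>\<omega>. max 0 (X 0 \<omega>) powr r)) \<mu> + 1"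
proof -
  have \<mu>: "0 < \<mu>" using assms by simp
  have int: "integrable M (\<lambda>\<omega>. walk_max N \<omega> powr a)" if "0 \<le> a" "a \<le> r" for a
    using integrable_walk_max_powr that by simp
  have "\<mu> powr p * expectation (\<lambda>\<omega>. walk_max N \<omega> powr p) = expectation (\<lambda>\<omega>. (\<mu> * walk_max N \<omega>) powr p)"
    using \<mu> by (simp add: powr_mult partial_sum_max_nonneg)
  also have "\<dots> \<le> expectation (\<lambda>\<omega>. (\<mu> * walk_max N \<omega>) powr (r - 1) + 1)"
  proof (rule integral_mono)
    show "integrable M (\<lambda>\<omega>. (\<mu> * walk_max N \<omega>) powr p)"
         "integrable M (\<lambda>\<omega>. (\<mu> * walk_max N \<omega>) powr (r - 1) + 1)"
      using int[of p] int[of "r - 1"] assms(2,3) r \<mu> by (simp_all add: powr_mult partial_sum_max_nonneg)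
    show "(\<mu> * walk_max N \<omega>) powr p \<le> (\<mu> * walk_max N \<omega>) powr (r - 1) + 1" for \<omega>
      using \<mu> assms(2,3) by (intro powr_le_powr_add_one) (auto simp: partial_sum_max_nonneg)
  qed
  also have "\<dots> = \<mu> powr (r - 1) * expectation (\<lambda>\<omega>. walk_max N \<omega> powr (r - 1)) + 1"
    using int[of "r - 1"] r \<mu> by (simp add: powr_mult partial_sum_max_nonneg prob_space)
  also have "\<dots> \<le> walk_moment_bound r (expectation (\<lambda>\<omega>. (X 0 \<omega>)\<^sup>2)) (expectation (\<lambda>\<omega>. max 0 (X 0 \<omega>) powr r)) \<mu> + 1"
    using walk_max_moment_le[OF assms(1), of N] by (simp add: \<mu>_def)
  finally show ?thesis .
qed

lemma workload_moment_le:
  assumes "expectation (X 0) < 0" "0 < p" "p \<le> r - 1"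
  defines "\<mu> \<equiv> - expectation (X 0)"
  shows "ennreal (\<mu> powr p) * (\<integral>\<^sup>+\<omega>. enn_powr (SUP m. ennreal (\<Sum>i<m. X i \<omega>)) p \<partial>M)
           \<le> ennreal (walk_moment_bound r (expectation (\<lambda>\<omega>. (X 0 \<omega>)\<^sup>2))
                        (expectation (\<lambda>\<omega>. max 0 (X 0 \<omega>) powr r)) \<mu> + 1)"
    (is "_ \<le> ennreal ?K")
proof -
  have \<mu>: "0 < \<mu>" using assms by simp
  have "(\<integral>\<^sup>+\<omega>. enn_powr (SUP m. ennreal (\<Sum>i<m. X i \<omega>)) p \<partial>M) \<le> ennreal (?K / \<mu> powr p)"
    using walk_max_scaled_moment_le[OF assms(1-3)] \<mu> assms(2,3) r
    by (intro nn_integral_enn_powr_SUP_sum_le integrable_walk_max_powr) (auto simp: \<mu>_def field_simps)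
  then have "ennreal (\<mu> powr p) * (\<integral>\<^sup>+\<omega>. enn_powr (SUP m. ennreal (\<Sum>i<m. X i \<omega>)) p \<partial>M)
             \<le> ennreal (\<mu> powr p) * ennreal (?K / \<mu> powr p)"
    by (rule mult_left_mono) simp
  also have "\<dots> = ennreal ?K" using \<mu> by (subst ennreal_mult'[symmetric]) auto
  finally show ?thesis .
qed

end

end

section \<open>The single-server queue\<close>

lemma (in prob_space) iid_sequence_increments:
  fixes A B :: "nat \<Rightarrow> 'a \<Rightarrow> real"
  assumes indep: "indep_vars (\<lambda>_. borel) (\<lambda>(b, i). if b then A i else B i) UNIV"
    and A_id: "\<And>i. distr M borel (A i) = distr M borel (A 0)"
    and B_id: "\<And>i. distr M borel (B i) = distr M borel (B 0)"
  shows "iid_sequence M (\<lambda>i \<omega>. B i \<omega> - A i \<omega>)"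
proof
  have diff: "(\<lambda>y. y (False, j) - y (True, j)) \<in> borel_measurable (PiM (UNIV \<times> {j}) (\<lambda>_. borel :: real measure))"
    for j :: nat
    by (intro borel_measurable_diff measurable_component_singleton) auto
  show "indep_vars (\<lambda>_. borel) (\<lambda>i \<omega>. B i \<omega> - A i \<omega>) UNIV"
    using indep_vars_compose_restrict[OF indep, of UNIV "\<lambda>j. UNIV \<times> {j}"
        "\<lambda>j y. y (False, j) - y (True, j)" "\<lambda>_. borel"] diff
    by (simp add: disjoint_family_on_def) blast
  have pair: "indep_var borel (A i) borel (B i)" for i
    using indep_var_compose[OF indep_var_restrict[OF indep, of "{(True, i)}" "{(False, i)}"],
        of "\<lambda>y. y (True, i)" borel "\<lambda>y. y (False, i)" borel]
    by (simp add: comp_def measurable_component_singleton)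
  have [measurable]: "A i \<in> borel_measurable M" "B i \<in> borel_measurable M" for i
    using pair[of i] by (auto dest: indep_var_rv1 indep_var_rv2)
  fix i
  have "distr M (borel \<Otimes>\<^sub>M borel) (\<lambda>\<omega>. (A i \<omega>, B i \<omega>)) = distr M (borel \<Otimes>\<^sub>M borel) (\<lambda>\<omega>. (A 0 \<omega>, B 0 \<omega>))"
    using pair[of i] pair[of 0] by (simp add: indep_var_distribution_eq A_id[of i] B_id[of i])
  then have "distr (distr M (borel \<Otimes>\<^sub>M borel) (\<lambda>\<omega>. (A i \<omega>, B i \<omega>))) borel (\<lambda>(a, b). b - a)
           = distr (distr M (borel \<Otimes>\<^sub>M borel) (\<lambda>\<omega>. (A 0 \<omega>, B 0 \<omega>))) borel (\<lambda>(a, b). b - a)"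
    by simp
  then show "distr M borel (\<lambda>\<omega>. B i \<omega> - A i \<omega>) = distr M borel (\<lambda>\<omega>. B 0 \<omega> - A 0 \<omega>)"
    by (simp add: distr_distr comp_def)
qed

lemma (in prob_space) integrable_of_nn_integral_le:
  assumes [measurable]: "f \<in> borel_measurable M" and "AE \<omega> in M. 0 \<le> f \<omega>"
    and "(\<integral>\<^sup>+\<omega>. ennreal (f \<omega>) \<partial>M) \<le> ennreal c" "0 \<le> c"
  shows "integrable M f" and "expectation f \<le> c"
proof -
  show int: "integrable M f"
    using assms by (intro integrableI_nonneg) (auto simp: le_less_trans)
  have "ennreal (expectation f) \<le> ennreal c"
    using nn_integral_eq_integral[OF int assms(2)] assms(3) by simp
  then show "expectation f \<le> c" using assms(4) by simp
qed

lemma (in prob_space) increment_moments: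
  fixes A B :: "'a \<Rightarrow> real"
  assumes [measurable]: "A \<in> borel_measurable M" "B \<in> borel_measurable M"
    and pos: "AE \<omega> in M. 0 < A \<omega>" "AE \<omega> in M. 0 < B \<omega>"
    and A_sq: "integrable M (\<lambda>\<omega>. (A \<omega>)\<^sup>2)"
    and B_mom: "(\<integral>\<^sup>+\<omega>. ennreal (B \<omega> powr q) \<partial>M) \<le> ennreal Bq" "0 \<le> Bq" and q: "2 \<le> q"
  shows "integrable M (\<lambda>\<omega>. (B \<omega> - A \<omega>)\<^sup>2)"
    and "expectation (\<lambda>\<omega>. (B \<omega> - A \<omega>)\<^sup>2) \<le> 2 * (Bq + 1) + 2 * expectation (\<lambda>\<omega>. (A \<omega>)\<^sup>2)"
    and "integrable M (\<lambda>\<omega>. max 0 (B \<omega> - A \<omega>) powr q)"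
    and "expectation (\<lambda>\<omega>. max 0 (B \<omega> - A \<omega>) powr q) \<le> Bq"
proof -
  have Bq: "integrable M (\<lambda>\<omega>. B \<omega> powr q)" "expectation (\<lambda>\<omega>. B \<omega> powr q) \<le> Bq"
    using integrable_of_nn_integral_le[of "\<lambda>\<omega>. B \<omega> powr q"] B_mom by auto
  have B_sq_le: "AE \<omega> in M. (B \<omega>)\<^sup>2 \<le> B \<omega> powr q + 1"
    using pos(2) by eventually_elim (use powr_le_powr_add_one[of _ 2 q] q in auto)
  have diff_sq_le: "AE \<omega> in M. (B \<omega> - A \<omega>)\<^sup>2 \<le> 2 * (B \<omega> powr q + 1) + 2 * (A \<omega>)\<^sup>2"
    using B_sq_le
  proof eventually_elim
    case (elim \<omega>)
    then show ?case using zero_le_power2[of "B \<omega> + A \<omega>"] by (simp add: power2_eq_square algebra_simps)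
  qed
  have bound_int: "integrable M (\<lambda>\<omega>. 2 * (B \<omega> powr q + 1) + 2 * (A \<omega>)\<^sup>2)"
    using Bq A_sq by auto
  show int_sq: "integrable M (\<lambda>\<omega>. (B \<omega> - A \<omega>)\<^sup>2)"
    by (rule Bochner_Integration.integrable_bound[OF bound_int]) (use diff_sq_le in \<open>auto elim!: eventually_mono\<close>)
  have "expectation (\<lambda>\<omega>. (B \<omega> - A \<omega>)\<^sup>2) \<le> expectation (\<lambda>\<omega>. 2 * (B \<omega> powr q + 1) + 2 * (A \<omega>)\<^sup>2)"
    using diff_sq_le by (intro integral_mono_AE int_sq bound_int)
  also have "\<dots> = 2 * (expectation (\<lambda>\<omega>. B \<omega> powr q) + 1) + 2 * expectation (\<lambda>\<omega>. (A \<omega>)\<^sup>2)"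
    using Bq A_sq by (simp add: prob_space)
  also have "\<dots> \<le> 2 * (Bq + 1) + 2 * expectation (\<lambda>\<omega>. (A \<omega>)\<^sup>2)"
    using Bq by simp
  finally show "expectation (\<lambda>\<omega>. (B \<omega> - A \<omega>)\<^sup>2) \<le> 2 * (Bq + 1) + 2 * expectation (\<lambda>\<omega>. (A \<omega>)\<^sup>2)" .
  have pos_part_le: "AE \<omega> in M. max 0 (B \<omega> - A \<omega>) powr q \<le> B \<omega> powr q"
    using pos by eventually_elim (use q in \<open>auto intro: powr_mono2\<close>)
  show int_pos: "integrable M (\<lambda>\<omega>. max 0 (B \<omega> - A \<omega>) powr q)"
    by (rule Bochner_Integration.integrable_bound[OF Bq(1)]) (use pos_part_le in \<open>auto elim!: eventually_mono\<close>)
  have "expectation (\<lambda>\<omega>. max 0 (B \<omega> - A \<omega>) powr q) \<le> expectation (\<lambda>\<omega>. B \<omega> powr q)"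
    using pos_part_le by (intro integral_mono_AE int_pos Bq)
  then show "expectation (\<lambda>\<omega>. max 0 (B \<omega> - A \<omega>) powr q) \<le> Bq" using Bq by linarith
qed

lemma (in prob_space) expectation_le_one_add_expectation_sq:
  fixes f :: "'a \<Rightarrow> real"
  assumes "integrable M f" "integrable M (\<lambda>\<omega>. (f \<omega>)\<^sup>2)"
  shows "expectation f \<le> 1 + expectation (\<lambda>\<omega>. (f \<omega>)\<^sup>2)"
proof -
  have "expectation f \<le> expectation (\<lambda>\<omega>. 1 + (f \<omega>)\<^sup>2)"
  proof (rule integral_mono)
    show "f \<omega> \<le> 1 + (f \<omega>)\<^sup>2" for \<omega>
      using zero_le_power2[of "f \<omega> - 1"]
      by (simp add: power2_diff) (use zero_le_power2[of "f \<omega>"] in linarith)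
  qed (use assms in auto)
  then show ?thesis using assms by (simp add: prob_space)
qed

lemma ennreal_one_sub_ratio_powr_mult_le:
  fixes a b c K p :: real and I :: ennreal
  assumes "0 < c" "c \<le> a" "b < a" "0 \<le> p" "0 \<le> K"
    and "ennreal ((a - b) powr p) * I \<le> ennreal K"
  shows "ennreal ((1 - b / a) powr p) * I \<le> ennreal (K / c powr p)"
proof -
  have "(1 - b / a) powr p = 1 / a powr p * (a - b) powr p"
    using assms by (simp add: field_simps powr_divide)
  then have "ennreal ((1 - b / a) powr p) = ennreal (1 / a powr p) * ennreal ((a - b) powr p)"
    by (simp only:) (rule ennreal_mult', simp)
  then have "ennreal ((1 - b / a) powr p) * I = ennreal (1 / a powr p) * (ennreal ((a - b) powr p) * I)"
    by (simp add: mult.assoc)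
  also have "\<dots> \<le> ennreal (1 / a powr p) * ennreal K"
    by (rule mult_left_mono[OF assms(6)]) simp
  also have "\<dots> = ennreal (K / a powr p)"
    by (simp add: ennreal_mult'[symmetric])
  also have "\<dots> \<le> ennreal (K / c powr p)"
    using assms by (intro ennreal_leI divide_left_mono powr_mono2) auto
  finally show ?thesis .
qed

lemma (in prob_space) queue_workload_moment_le:
  fixes A B :: "nat \<Rightarrow> 'a \<Rightarrow> real"
  assumes indep: "indep_vars (\<lambda>_. borel) (\<lambda>(b, i). if b then A i else B i) UNIV"
    and A_id: "\<And>i. distr M borel (A i) = distr M borel (A 0)"
    and B_id: "\<And>i. distr M borel (B i) = distr M borel (B 0)"
    and pos: "AE \<omega> in M. 0 < A 0 \<omega>" "AE \<omega> in M. 0 < B 0 \<omega>"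
    and int: "integrable M (A 0)" "integrable M (B 0)"
    and A_sq: "integrable M (\<lambda>\<omega>. (A 0 \<omega>)\<^sup>2)" "expectation (\<lambda>\<omega>. (A 0 \<omega>)\<^sup>2) \<le> L"
    and B_mom: "(\<integral>\<^sup>+\<omega>. ennreal (B 0 \<omega> powr q) \<partial>M) \<le> ennreal Bq" "0 \<le> Bq"
    and load: "0 < Amin" "Amin \<le> expectation (A 0)" "expectation (B 0) < expectation (A 0)"
    and q: "2 \<le> q" and p: "0 < p" "p \<le> q - 1"
  shows "ennreal ((1 - expectation (B 0) / expectation (A 0)) powr p) * (\<integral>\<^sup>+\<omega>. enn_powr (workload B A \<omega>) p \<partial>M)
           \<le> ennreal ((walk_moment_bound q (2 * (Bq + 1) + 2 * L) Bq (1 + L) + 1) / Amin powr p)"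
    (is "_ \<le> ennreal (?K / _)")
proof -
  define a where "a = expectation (A 0)"
  define b where "b = expectation (B 0)"
  define X where "X = (\<lambda>i \<omega>. B i \<omega> - A i \<omega>)"
  interpret X: iid_sequence M X
    unfolding X_def by (rule iid_sequence_increments[OF indep A_id B_id])
  have measurable: "A 0 \<in> borel_measurable M" "B 0 \<in> borel_measurable M"
    using int by auto
  have X0: "B 0 \<omega> - A 0 \<omega> = X 0 \<omega>" for \<omega> by (simp add: X_def)
  note moments = increment_moments[OF measurable pos A_sq(1) B_mom q, unfolded X0]
  have EX: "expectation (X 0) = b - a" using int by (simp add: X_def a_def b_def)
  have "0 \<le> b" unfolding b_def using pos(2) by (intro integral_nonneg_AE) (auto elim: eventually_mono)
  moreover have "a \<le> 1 + L"
    using expectation_le_one_add_expectation_sq[OF int(1) A_sq(1)] A_sq(2) by (simp add: a_def)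
  ultimately have \<mu>: "0 < a - b" "a - b \<le> 1 + L" using load by (auto simp: a_def b_def)
  have "ennreal ((a - b) powr p) * (\<integral>\<^sup>+\<omega>. enn_powr (workload B A \<omega>) p \<partial>M)
        \<le> ennreal (walk_moment_bound q (expectation (\<lambda>\<omega>. (X 0 \<omega>)\<^sup>2))
                     (expectation (\<lambda>\<omega>. max 0 (X 0 \<omega>) powr q)) (a - b) + 1)"
    using X.workload_moment_le[of q, OF q _ moments(1,3) _ p] int \<mu> EX
    by (simp add: workload_def X_def a_def b_def)
  also have "\<dots> \<le> ennreal ?K"
    using moments(2,4) A_sq(2) q \<mu>
    by (intro ennreal_leI add_right_mono walk_moment_bound_mono integral_nonneg_AE) auto
  finally show ?thesis
    using walk_moment_bound_nonneg[of q "2 * (Bq + 1) + 2 * L" Bq "1 + L"] load p q B_mom(2) \<mu>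
    by (intro ennreal_one_sub_ratio_powr_mult_le) (auto simp: a_def b_def)
qed

lemma limsup_less_top_imp_eventually_le:
  fixes f :: "nat \<Rightarrow> real"
  assumes "limsup (\<lambda>n. ereal (f n)) < \<infinity>"
  obtains L where "eventually (\<lambda>n. f n \<le> L) sequentially"
proof -
  obtain k :: nat where "limsup (\<lambda>n. ereal (f n)) < real k"
    using assms less_PInf_Ex_of_nat by auto
  from Limsup_lessD[OF this] show ?thesis
    by (intro that[of "real k"]) (auto elim: eventually_mono)
qed

theorem lemma2:
  fixes M :: "'a measure"
    and A B :: "nat \<Rightarrow> nat \<Rightarrow> 'a \<Rightarrow> real"
    and \<rho> :: "nat \<Rightarrow> real"
    and \<rho>0 Amin \<delta> \<gamma> p q :: real
  assumes M: "prob_space M"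
    and indep: "\<And>n. prob_space.indep_vars M (\<lambda>_. borel)
                  (\<lambda>(b, i). if b then A n i else B n i) (UNIV :: (bool \<times> nat) set)"
    and A_id: "\<And>n i. distr M borel (A n i) = distr M borel (A n 0)"
    and B_id: "\<And>n i. distr M borel (B n i) = distr M borel (B n 0)"
    and A_pos: "\<And>n i. AE \<omega> in M. A n i \<omega> > 0"
    and B_pos: "\<And>n i. AE \<omega> in M. B n i \<omega> > 0"
    and A_int: "\<And>n. integrable M (A n 0)"
    and B_int: "\<And>n. integrable M (B n 0)"
    and rho_def: "\<And>n. \<rho> n = prob_space.expectation M (B n 0) / prob_space.expectation M (A n 0)"
    and rho0: "0 < \<rho>0" "\<rho>0 < 1"
    and Amin: "Amin > 0"
    and loads: "\<And>n. \<rho>0 * Amin \<le> \<rho>0 * prob_space.expectation M (A n 0)"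
               "\<And>n. \<rho>0 * prob_space.expectation M (A n 0) \<le> prob_space.expectation M (B n 0)"
               "\<And>n. prob_space.expectation M (B n 0) < prob_space.expectation M (A n 0)"
    and rho_lim: "\<rho> \<longlonglongrightarrow> 1"
    and A_var: "\<And>n. integrable M (\<lambda>\<omega>. (A n 0 \<omega>)\<^sup>2)"
    and A_sq: "limsup (\<lambda>n. ereal (prob_space.expectation M (\<lambda>\<omega>. (A n 0 \<omega>)\<^sup>2))) < \<infinity>"
    and delta_gamma: "\<delta> > 0" "\<gamma> > 0"
      "\<And>n. measure M {\<omega> \<in> space M. B n 0 \<omega> - A n 0 \<omega> \<ge> \<delta>} \<ge> \<gamma>"
    and p: "p > 0"
    and q: "q = max 2 (p + 1)"
    and B_mom: "(SUP n. \<integral>\<^sup>+ \<omega>. ennreal (B n 0 \<omega> powr q) \<partial>M) < \<infinity>"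
  shows "limsup (\<lambda>n. ennreal ((1 - \<rho> n) powr p) *
            (\<integral>\<^sup>+ \<omega>. enn_powr (workload (B n) (A n) \<omega>) p \<partial>M)) < \<infinity>"
proof -
  \<comment> \<open>The bound is uniform in \<open>n\<close>.\<close>
  interpret prob_space M by (rule M)
  have q2: "2 \<le> q" and pq: "p \<le> q - 1" using q by auto
  obtain L where L: "eventually (\<lambda>n. expectation (\<lambda>\<omega>. (A n 0 \<omega>)\<^sup>2) \<le> L) sequentially"
    using limsup_less_top_imp_eventually_le[OF A_sq] .
  define Bq where "Bq = enn2real (SUP n. \<integral>\<^sup>+ \<omega>. ennreal (B n 0 \<omega> powr q) \<partial>M)"
  have Bq: "(\<integral>\<^sup>+ \<omega>. ennreal (B n 0 \<omega> powr q) \<partial>M) \<le> ennreal Bq" for n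
    using B_mom unfolding Bq_def by (subst ennreal_enn2real) (auto intro: SUP_upper)
  have Bq_nonneg: "0 \<le> Bq" by (simp add: Bq_def)
  have "eventually (\<lambda>n. ennreal ((1 - \<rho> n) powr p) * (\<integral>\<^sup>+ \<omega>. enn_powr (workload (B n) (A n) \<omega>) p \<partial>M)
          \<le> ennreal ((walk_moment_bound q (2 * (Bq + 1) + 2 * L) Bq (1 + L) + 1) / Amin powr p)) sequentially"
    using L
  proof eventually_elim
    case (elim n)
    have "Amin \<le> expectation (A n 0)" using loads(1)[of n] rho0(1) by simp
    from queue_workload_moment_le[OF indep A_id B_id A_pos B_pos A_int B_int A_var elim Bq Bq_nonneg
        Amin this loads(3) q2 p pq]
    show ?case by (simp only: rho_def)
  qed
  then have "limsup (\<lambda>n. ennreal ((1 - \<rho> n) powr p) * (\<integral>\<^sup>+ \<omega>. enn_powr (workload (B n) (A n) \<omega>) p \<partial>M))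
               \<le> ennreal ((walk_moment_bound q (2 * (Bq + 1) + 2 * L) Bq (1 + L) + 1) / Amin powr p)"
    by (rule Limsup_bounded)
  also have "\<dots> < \<infinity>" by simp
  finally show ?thesis .
qed

end
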